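(* For $n\ge1$ let $Z_n$ be the balanced Thick-$\mathcal{Z}$ graph with $|U_1|=|V_1|=|U_2|=|V_2|=n$. When the edges of $Z_n$ are revealed one by one in a uniformly random order to the greedy algorithm, the expected size of the resulting matching is $\left(\frac12+o(1)\right)|\textsc{OPT}|$ as $n\to\infty$, where $\textsc{OPT}$ is a maximum matching of $Z_n$.
   Context: A Thick-$\mathcal{Z}$ graph is a bipartite graph with sides $U_1\cup U_2$ and $V_1\cup V_2$ (disjoint sets), $|U_1|=|V_1|$, $|U_2|=|V_2|$, whose edge set is the union of a perfect matching between $U_1$ and $V_1$, a perfect matching between $U_2$ and $V_2$, and the complete bipartite graph between $U_2$ and $V_1$; it is balanced if additionally $|U_1|=|V_2|$. The greedy algorithm adds an arriving edge whenever the current set plus that edge is a matching. *)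

theory Defs
  imports "HOL-Probability.Probability" "HOL-Combinatorics.Multiset_Permutations"
begin

text \<open>Bipartite graphs are given by their edge set, a set of pairs (left vertex, right vertex).\<close>

definition is_matching :: "('a \<times> 'b) set \<Rightarrow> bool" where
  "is_matching M \<longleftrightarrow>
     (\<forall>(u, v) \<in> M. \<forall>(u', v') \<in> M. (u = u' \<or> v = v') \<longrightarrow> (u, v) = (u', v'))"

definition max_matching_size :: "('a \<times> 'b) set \<Rightarrow> nat" where
  "max_matching_size E = Max {card M | M. M \<subseteq> E \<and> is_matching M}"

fun greedy :: "('a \<times> 'b) set \<Rightarrow> ('a \<times> 'b) list \<Rightarrow> ('a \<times> 'b) set" where
  "greedy M [] = M"
| "greedy M (e # es) = greedy (if is_matching (insert e M) then insert e M else M) es"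

text \<open>Balanced Thick-Z graph Z_n: left side U1 = {0..<n}, U2 = {n..<2n};
  right side V1 = {0..<n}, V2 = {n..<2n}.\<close>
definition thick_Z :: "nat \<Rightarrow> (nat \<times> nat) set" where
  "thick_Z n = {(i, i) | i. i < n} \<union> {(i, i) | i. n \<le> i \<and> i < 2 * n}
               \<union> {(u, v) | u v. n \<le> u \<and> u < 2 * n \<and> v < n}"

definition expected_greedy :: "('a \<times> 'b) set \<Rightarrow> real" where
  "expected_greedy E =
     measure_pmf.expectation (pmf_of_set (permutations_of_set E)) (\<lambda>\<sigma>. real (card (greedy {} \<sigma>)))"

end

theory Submission
  imports Defs
begin

text \<open>Greedy always matches every vertex of \<open>V\<^sub>1\<close>, since the edge from its partner in
  \<open>U\<^sub>1\<close> is the only edge at that partner; so it outputs at least \<open>n\<close> edges, half of the perfect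
  matching.  For the upper bound split the random order at time \<open>T = n\<^sup>2 div j\<close>.  Only
  \<open>O(n/j)\<close> of the first \<open>T\<close> edges are diagonal in expectation, and greedy can end with more than
  \<open>n + O(n/j)\<close> edges only if, at time \<open>T\<close>, \<open>k = n div j\<close> vertices of \<open>V\<^sub>1\<close> and \<open>k\<close> of \<open>U\<^sub>2\<close>
  are still unmatched with none of the \<open>k\<^sup>2\<close> edges between them arrived.  A union bound over
  the at most \<open>4\<^sup>n\<close> pairs of \<open>k\<close>-sets bounds the probability of this by
  \<open>4\<^sup>n exp (-n\<^sup>2 / (24 j\<^sup>3))\<close>, which is at most \<open>1/j\<close> for large \<open>n\<close>.\<close>

section \<open>Greedy matchings\<close>

lemma is_matching_iff:
  "is_matching M \<longleftrightarrow>
     (\<forall>u v u' v'. (u, v) \<in> M \<longrightarrow> (u', v') \<in> M \<longrightarrow> (u = u' \<or> v = v') \<longrightarrow> u = u' \<and> v = v')"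
  unfolding is_matching_def by (simp add: Ball_def split_paired_all)

lemma is_matching_empty [simp]: "is_matching {}"
  by (simp add: is_matching_def)

lemma is_matching_subset: "is_matching N \<Longrightarrow> M \<subseteq> N \<Longrightarrow> is_matching M"
  unfolding is_matching_iff by blast

lemma is_matching_inj_on_fst: "is_matching M \<Longrightarrow> inj_on fst M"
  unfolding is_matching_iff inj_on_def by auto

lemma is_matching_inj_on_snd: "is_matching M \<Longrightarrow> inj_on snd M"
  unfolding is_matching_iff inj_on_def by auto

lemma is_matching_greedy: "is_matching M \<Longrightarrow> is_matching (greedy M es)"
  by (induction es arbitrary: M) simp_all

lemma greedy_mono: "M \<subseteq> greedy M es"
proof (induction es arbitrary: M)
  case (Cons e es)
  have "M \<subseteq> (if is_matching (insert e M) then insert e M else M)" by auto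
  then show ?case using Cons.IH[of "if is_matching (insert e M) then insert e M else M"] by simp
qed simp

lemma greedy_subset: "greedy M es \<subseteq> M \<union> set es"
proof (induction es arbitrary: M)
  case (Cons e es)
  have "(if is_matching (insert e M) then insert e M else M) \<subseteq> insert e M" by auto
  then show ?case using Cons.IH[of "if is_matching (insert e M) then insert e M else M"] by auto
qed simp

lemma greedy_append: "greedy M (xs @ ys) = greedy (greedy M xs) ys"
  by (induction xs arbitrary: M) auto

lemma greedy_covers:
  assumes "is_matching M" "(u, v) \<in> set es"
  shows "\<exists>(u', v') \<in> greedy M es. u' = u \<or> v' = v"
  using assms
proof (induction es arbitrary: M)
  case (Cons e es)
  let ?M' = "if is_matching (insert e M) then insert e M else M"
  show ?case
  proof (cases "e = (u, v)")
    case True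
    have "\<exists>(u', v') \<in> ?M'. u' = u \<or> v' = v"
      using Cons.prems True unfolding is_matching_iff by auto
    moreover have "greedy M (e # es) = greedy ?M' es" by simp
    ultimately show ?thesis using greedy_mono[of ?M' es] by (simp only:) blast
  next
    case False
    then show ?thesis using Cons by simp
  qed
qed simp

section \<open>Averages over all orderings\<close>

definition perm_avg :: "'a set \<Rightarrow> ('a list \<Rightarrow> real) \<Rightarrow> real" where
  "perm_avg A f = (\<Sum>\<sigma>\<in>permutations_of_set A. f \<sigma>) / fact (card A)"

lemma expected_greedy_eq_perm_avg:
  "finite E \<Longrightarrow> expected_greedy E = perm_avg E (\<lambda>\<sigma>. real (card (greedy {} \<sigma>)))"
  unfolding expected_greedy_def perm_avg_def by (subst integral_pmf_of_set) auto

lemma perm_avg_mono: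
  assumes "\<And>\<sigma>. \<sigma> \<in> permutations_of_set A \<Longrightarrow> f \<sigma> \<le> g \<sigma>"
  shows "perm_avg A f \<le> perm_avg A g"
  unfolding perm_avg_def by (intro divide_right_mono sum_mono assms) auto

lemma perm_avg_add: "perm_avg A (\<lambda>\<sigma>. f \<sigma> + g \<sigma>) = perm_avg A f + perm_avg A g"
  unfolding perm_avg_def by (simp add: sum.distrib add_divide_distrib)

lemma perm_avg_cmult: "perm_avg A (\<lambda>\<sigma>. c * f \<sigma>) = c * perm_avg A f"
  unfolding perm_avg_def by (simp add: sum_distrib_left)

lemma perm_avg_sum: "perm_avg A (\<lambda>\<sigma>. \<Sum>i\<in>I. f i \<sigma>) = (\<Sum>i\<in>I. perm_avg A (f i))"
  unfolding perm_avg_def by (simp add: sum.swap[of _ I] sum_divide_distrib)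

lemma perm_avg_const: "finite A \<Longrightarrow> perm_avg A (\<lambda>_. c) = c"
  unfolding perm_avg_def by simp

lemma perm_avg_Cons:
  assumes "finite A" "A \<noteq> {}"
  shows "perm_avg A f = (\<Sum>x\<in>A. perm_avg (A - {x}) (\<lambda>xs. f (x # xs))) / card A"
proof -
  have sum_split: "(\<Sum>\<sigma>\<in>permutations_of_set A. f \<sigma>) =
        (\<Sum>x\<in>A. \<Sum>xs\<in>permutations_of_set (A - {x}). f (x # xs))"
  proof -
    have "(\<Sum>\<sigma>\<in>permutations_of_set A. f \<sigma>) =
          (\<Sum>x\<in>A. \<Sum>\<sigma>\<in>(\<lambda>xs. x # xs) ` permutations_of_set (A - {x}). f \<sigma>)"
      unfolding permutations_of_set_nonempty[OF assms(2)]
      by (rule sum.UNION_disjoint) (use assms in auto)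
    also have "\<dots> = (\<Sum>x\<in>A. \<Sum>xs\<in>permutations_of_set (A - {x}). f (x # xs))"
      by (simp add: sum.reindex inj_on_def)
    finally show ?thesis .
  qed
  have "fact (card A) = real (card A) * fact (card A - 1)"
    using assms by (intro fact_reduce) (simp add: card_gt_0_iff)
  moreover have "x \<in> A \<Longrightarrow> card (A - {x}) = card A - 1" for x
    using assms by simp
  ultimately show ?thesis
    unfolding perm_avg_def sum_split by (simp add: sum_divide_distrib mult.commute)
qed

lemma perm_avg_prefix_disjoint_le:
  assumes "finite A" "S \<subseteq> A"
  shows "perm_avg A (\<lambda>\<sigma>. of_bool (set (take T \<sigma>) \<inter> S = {})) \<le> (1 - card S / card A) ^ T"
  using assms
proof (induction T arbitrary: A)
  case 0
  then show ?case by (simp add: perm_avg_const)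
next
  case (Suc T)
  show ?case
  proof (cases "A = {}")
    case True
    then show ?thesis using Suc.prems by (simp add: perm_avg_const)
  next
    case False
    define N where "N = card A"
    define s where "s = card S"
    define q where "q = 1 - real s / N"
    have N_pos: "N > 0" using False Suc.prems by (simp add: N_def card_gt_0_iff)
    have "s \<le> N" unfolding s_def N_def using Suc.prems card_mono by blast
    have after_x: "perm_avg (A - {x}) (\<lambda>xs. of_bool (set (take (Suc T) (x # xs)) \<inter> S = {}))
        \<le> (if x \<in> S then 0 else q ^ T)" if "x \<in> A" for x
    proof (cases "x \<in> S")
      case True
      then show ?thesis using Suc.prems by (simp add: perm_avg_const)
    next
      case False
      have card_rest: "card (A - {x}) = N - 1" using \<open>x \<in> A\<close> Suc.prems by (simp add: N_def)
      have "s \<le> N - 1" unfolding s_def card_rest[symmetric]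
        using Suc.prems False \<open>x \<in> A\<close> by (intro card_mono) auto
      then have q_le: "0 \<le> 1 - s / card (A - {x}) \<and> 1 - s / card (A - {x}) \<le> q"
        using N_pos by (cases "N = 1") (auto simp: card_rest q_def divide_le_eq_1
            intro!: divide_left_mono)
      have "perm_avg (A - {x}) (\<lambda>xs. of_bool (set (take (Suc T) (x # xs)) \<inter> S = {}))
          = perm_avg (A - {x}) (\<lambda>xs. of_bool (set (take T xs) \<inter> S = {}))"
        using False by simp
      also have "\<dots> \<le> (1 - s / card (A - {x})) ^ T"
        using Suc.prems False unfolding s_def by (intro Suc.IH) auto
      also have "\<dots> \<le> q ^ T"
        using q_le by (intro power_mono) auto
      finally show ?thesis using False by simp
    qed
    have "perm_avg A (\<lambda>\<sigma>. of_bool (set (take (Suc T) \<sigma>) \<inter> S = {}))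
        \<le> (\<Sum>x\<in>A. (if x \<in> S then 0 else q ^ T)) / N"
      unfolding perm_avg_Cons[OF Suc.prems(1) False] N_def[symmetric]
      by (intro divide_right_mono sum_mono after_x) auto
    also have "(\<Sum>x\<in>A. (if x \<in> S then 0 else q ^ T)) = real (N - s) * q ^ T"
      using Suc.prems finite_subset[of S A]
      by (simp add: sum.If_cases N_def s_def Diff_eq[symmetric] card_Diff_subset)
    also have "real (N - s) * q ^ T / N = q ^ Suc T"
      using N_pos \<open>s \<le> N\<close> by (simp add: q_def field_simps)
    finally show ?thesis by (simp add: q_def N_def s_def)
  qed
qed

lemma perm_avg_prefix_count_le:
  assumes "finite A" "G \<subseteq> A"
  shows "perm_avg A (\<lambda>\<sigma>. real (card (set (take T \<sigma>) \<inter> G))) \<le> real T * card G / card A"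
  using assms
proof (induction T arbitrary: A G)
  case 0
  then show ?case by (simp add: perm_avg_const)
next
  case (Suc T)
  show ?case
  proof (cases "A = {}")
    case True
    then show ?thesis using Suc.prems by (simp add: perm_avg_const)
  next
    case False
    define N where "N = card A"
    define g where "g = card G"
    have N_pos: "N > 0" using False Suc.prems by (simp add: N_def card_gt_0_iff)
    have "finite G" using Suc.prems finite_subset by blast
    have after_x: "perm_avg (A - {x}) (\<lambda>xs. real (card (set (take (Suc T) (x # xs)) \<inter> G)))
        \<le> of_bool (x \<in> G) + real T * (real g - of_bool (x \<in> G)) / (real N - 1)"
      if "x \<in> A" for x
    proof -
      have "card (set (take (Suc T) (x # xs)) \<inter> G)
          \<le> of_bool (x \<in> G) + card (set (take T xs) \<inter> (G - {x}))" for xs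
      proof -
        have "set (take (Suc T) (x # xs)) \<inter> G = (G \<inter> {x}) \<union> (set (take T xs) \<inter> (G - {x}))"
          by auto
        then have "card (set (take (Suc T) (x # xs)) \<inter> G) \<le> card (G \<inter> {x}) + card (set (take T xs) \<inter> (G - {x}))"
          by (metis card_Un_le)
        moreover have "card (G \<inter> {x}) = of_bool (x \<in> G)"
          by (cases "x \<in> G") auto
        ultimately show ?thesis by simp
      qed
      then have "perm_avg (A - {x}) (\<lambda>xs. real (card (set (take (Suc T) (x # xs)) \<inter> G)))
          \<le> perm_avg (A - {x}) (\<lambda>xs. of_bool (x \<in> G) + real (card (set (take T xs) \<inter> (G - {x}))))"
        by (intro perm_avg_mono) (use of_nat_mono in fastforce)
      also have "\<dots> = of_bool (x \<in> G) + perm_avg (A - {x}) (\<lambda>xs. real (card (set (take T xs) \<inter> (G - {x}))))"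
        using Suc.prems by (simp add: perm_avg_add perm_avg_const)
      also have "\<dots> \<le> of_bool (x \<in> G) + real T * card (G - {x}) / card (A - {x})"
        using Suc.prems by (simp add: Suc.IH Diff_mono)
      also have "card (A - {x}) = N - 1" using \<open>x \<in> A\<close> Suc.prems by (simp add: N_def)
      also have "real (card (G - {x})) = real g - of_bool (x \<in> G)"
        using \<open>finite G\<close> card_gt_0_iff[of G] by (cases "x \<in> G") (auto simp: g_def Suc_le_eq)
      finally show ?thesis using N_pos by simp
    qed
    have g_sum: "(\<Sum>x\<in>A. of_bool (x \<in> G) :: real) = g"
      using Suc.prems by (simp add: g_def Int_absorb1 Int_commute flip: sum.inter_filter)
    have "perm_avg A (\<lambda>\<sigma>. real (card (set (take (Suc T) \<sigma>) \<inter> G)))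
        \<le> (\<Sum>x\<in>A. of_bool (x \<in> G) + real T * (real g - of_bool (x \<in> G)) / (real N - 1)) / N"
      unfolding perm_avg_Cons[OF Suc.prems(1) False] N_def[symmetric]
      by (intro divide_right_mono sum_mono after_x) auto
    also have "(\<Sum>x\<in>A. of_bool (x \<in> G) + real T * (real g - of_bool (x \<in> G)) / (real N - 1))
        = g + real T * (real N * g - g) / (real N - 1)"
      by (simp add: sum.distrib flip: sum_divide_distrib sum_distrib_left)
        (simp add: sum_subtractf g_sum N_def)
    also have "\<dots> \<le> real (Suc T) * g"
      using N_pos by (cases "N = 1") (auto simp: field_simps)
    finally show ?thesis using N_pos by (simp add: N_def g_def divide_right_mono)
  qed
qed

section \<open>The balanced Thick-Z graph\<close>

definition thick_Z_diag :: "nat \<Rightarrow> (nat \<times> nat) set" where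
  "thick_Z_diag n = (\<lambda>i. (i, i)) ` {0..<2 * n}"

definition thick_Z_cross :: "nat \<Rightarrow> (nat \<times> nat) set" where
  "thick_Z_cross n = {n..<2 * n} \<times> {0..<n}"

lemma thick_Z_eq: "thick_Z n = thick_Z_diag n \<union> thick_Z_cross n"
  unfolding thick_Z_def thick_Z_diag_def thick_Z_cross_def by auto

lemma finite_thick_Z [simp]: "finite (thick_Z n)"
  by (simp add: thick_Z_eq thick_Z_diag_def thick_Z_cross_def)

lemma card_thick_Z_diag: "card (thick_Z_diag n) = 2 * n"
  unfolding thick_Z_diag_def by (subst card_image) (auto simp: inj_on_def)

lemma is_matching_thick_Z_diag: "is_matching (thick_Z_diag n)"
  unfolding is_matching_iff thick_Z_diag_def by auto

lemma card_thick_Z: "card (thick_Z n) = n * n + 2 * n"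
proof -
  have "card (thick_Z_cross n) = n * n"
    unfolding thick_Z_cross_def by (simp add: card_cartesian_product)
  moreover have "thick_Z_diag n \<inter> thick_Z_cross n = {}"
    unfolding thick_Z_diag_def thick_Z_cross_def by auto
  ultimately show ?thesis
    unfolding thick_Z_eq using card_thick_Z_diag
    by (simp add: card_Un_disjoint thick_Z_diag_def thick_Z_cross_def)
qed

lemma card_matching_thick_Z_le:
  assumes "M \<subseteq> thick_Z n" "is_matching M"
  shows "card M \<le> 2 * n"
proof -
  have "card M = card (fst ` M)"
    using is_matching_inj_on_fst[OF assms(2)] by (simp add: card_image)
  also have "\<dots> \<le> card {0..<2 * n}"
    using assms(1) by (intro card_mono) (auto simp: thick_Z_def)
  finally show ?thesis by simp
qed

lemma max_matching_size_thick_Z: "max_matching_size (thick_Z n) = 2 * n"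
  unfolding max_matching_size_def
proof (rule Max_eqI)
  show "finite {card M |M. M \<subseteq> thick_Z n \<and> is_matching M}"
    by (rule finite_subset[of _ "{0..2 * n}"]) (auto dest: card_matching_thick_Z_le)
  show "y \<le> 2 * n" if "y \<in> {card M |M. M \<subseteq> thick_Z n \<and> is_matching M}" for y
    using that card_matching_thick_Z_le by auto
  show "2 * n \<in> {card M |M. M \<subseteq> thick_Z n \<and> is_matching M}"
    using card_thick_Z_diag is_matching_thick_Z_diag
    by (intro CollectI exI[of _ "thick_Z_diag n"]) (auto simp: thick_Z_eq)
qed

lemma card_greedy_thick_Z_ge:
  assumes "set \<sigma> = thick_Z n"
  shows "n \<le> card (greedy {} \<sigma>)"
proof -
  define M where "M = greedy {} \<sigma>"
  have M_sub: "M \<subseteq> thick_Z n"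
    unfolding M_def using greedy_subset[of "{}" \<sigma>] assms by simp
  then have "finite M" by (rule finite_subset) simp
  have "{0..<n} \<subseteq> snd ` M"
  proof
    fix i assume "i \<in> {0..<n}"
    then have "(i, i) \<in> set \<sigma>" using assms by (auto simp: thick_Z_def)
    then obtain u v where "(u, v) \<in> M" "u = i \<or> v = i"
      using greedy_covers[of "{}" i i \<sigma>] by (auto simp: M_def)
    moreover have "v = i" using calculation M_sub \<open>i \<in> {0..<n}\<close> by (auto simp: thick_Z_def)
    ultimately show "i \<in> snd ` M" by force
  qed
  then have "card {0..<n} \<le> card (snd ` M)"
    using \<open>finite M\<close> by (intro card_mono) auto
  also have "\<dots> \<le> card M" using \<open>finite M\<close> by (rule card_image_le)
  finally show ?thesis by (simp add: M_def)
qed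

definition unmatched_V1 :: "nat \<Rightarrow> (nat \<times> nat) set \<Rightarrow> nat set" where
  "unmatched_V1 n M = {0..<n} - snd ` M"

definition unmatched_U2 :: "nat \<Rightarrow> (nat \<times> nat) set \<Rightarrow> nat set" where
  "unmatched_U2 n M = {n..<2 * n} - fst ` M"

lemma card_matching_thick_Z_le_diag:
  assumes "M \<subseteq> thick_Z n" "is_matching M"
  shows "card M \<le> n + card {i \<in> {0..<n}. (i, i) \<in> M}"
proof -
  define X where "X = {i \<in> {0..<n}. (i, i) \<in> M}"
  define M2 where "M2 = {e \<in> M. n \<le> fst e}"
  have "finite M" using assms(1) by (rule finite_subset) simp
  have "M \<subseteq> (\<lambda>i. (i, i)) ` X \<union> M2"
    using assms(1) by (force simp: thick_Z_def X_def M2_def)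
  then have "card M \<le> card ((\<lambda>i. (i, i)) ` X \<union> M2)"
    using \<open>finite M\<close> by (intro card_mono) (auto simp: X_def M2_def)
  also have "\<dots> \<le> card ((\<lambda>i. (i, i)) ` X) + card M2"
    by (rule card_Un_le)
  also have "card ((\<lambda>i. (i, i)) ` X) = card X"
    by (simp add: card_image inj_on_def)
  also have "card M2 = card (fst ` M2)"
    using is_matching_inj_on_fst[OF is_matching_subset[OF assms(2)]]
    by (simp add: card_image M2_def)
  also have "\<dots> \<le> card {n..<2 * n}"
    using assms(1) by (intro card_mono) (auto simp: thick_Z_def M2_def)
  finally show ?thesis by (simp add: X_def)
qed

lemma card_diag_le_unmatched_V1:
  assumes "is_matching M" "M' \<subseteq> M" "finite M'"
  shows "card {i \<in> {0..<n}. (i, i) \<in> M} \<le> card (M' \<inter> thick_Z_diag n) + card (unmatched_V1 n M')"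
proof -
  have "{i \<in> {0..<n}. (i, i) \<in> M} \<subseteq> fst ` (M' \<inter> thick_Z_diag n) \<union> unmatched_V1 n M'"
  proof
    fix i assume i: "i \<in> {i \<in> {0..<n}. (i, i) \<in> M}"
    show "i \<in> fst ` (M' \<inter> thick_Z_diag n) \<union> unmatched_V1 n M'"
    proof (cases "i \<in> snd ` M'")
      case True
      then obtain u where "(u, i) \<in> M'" by force
      moreover from this have "u = i"
        using assms(1,2) i unfolding is_matching_iff by blast
      ultimately show ?thesis using i by (force simp: thick_Z_diag_def)
    next
      case False
      then show ?thesis using i by (simp add: unmatched_V1_def)
    qed
  qed
  then have "card {i \<in> {0..<n}. (i, i) \<in> M} \<le> card (fst ` (M' \<inter> thick_Z_diag n) \<union> unmatched_V1 n M')"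
    using assms(3) by (intro card_mono) (auto simp: unmatched_V1_def)
  also have "\<dots> \<le> card (fst ` (M' \<inter> thick_Z_diag n)) + card (unmatched_V1 n M')"
    by (rule card_Un_le)
  also have "card (fst ` (M' \<inter> thick_Z_diag n)) \<le> card (M' \<inter> thick_Z_diag n)"
    using assms(3) by (intro card_image_le) simp
  finally show ?thesis by simp
qed

text \<open>Each cross edge of \<open>M\<close> matches one vertex of \<open>V\<^sub>1\<close> and one of \<open>U\<^sub>2\<close>, and the only other
  edges covering \<open>U\<^sub>2\<close> are diagonal.\<close>

lemma card_unmatched_V1_le:
  assumes "M \<subseteq> thick_Z n" "is_matching M"
  shows "card (unmatched_V1 n M) \<le> card (unmatched_U2 n M) + card (M \<inter> thick_Z_diag n)"
proof -
  define C where "C = M \<inter> thick_Z_cross n"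
  have "finite M" using assms(1) by (rule finite_subset) simp
  have "card C = card (snd ` C)"
    using is_matching_inj_on_snd[OF is_matching_subset[OF assms(2)]] by (simp add: card_image C_def)
  also have "\<dots> \<le> card ({0..<n} \<inter> snd ` M)"
    by (intro card_mono) (auto simp: C_def thick_Z_cross_def)
  finally have covered_V1: "card C \<le> card ({0..<n} \<inter> snd ` M)" .
  have "{n..<2 * n} \<inter> fst ` M \<subseteq> fst ` C \<union> fst ` (M \<inter> thick_Z_diag n)"
    using assms(1) by (force simp: C_def thick_Z_eq)
  then have "card ({n..<2 * n} \<inter> fst ` M) \<le> card (fst ` C \<union> fst ` (M \<inter> thick_Z_diag n))"
    using \<open>finite M\<close> by (intro card_mono) (auto simp: C_def)
  also have "\<dots> \<le> card (fst ` C) + card (fst ` (M \<inter> thick_Z_diag n))"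
    by (rule card_Un_le)
  also have "\<dots> \<le> card C + card (M \<inter> thick_Z_diag n)"
    using \<open>finite M\<close> by (intro add_mono card_image_le) (auto simp: C_def)
  finally have covered_U2: "card ({n..<2 * n} \<inter> fst ` M) \<le> card C + card (M \<inter> thick_Z_diag n)" .
  have "card (unmatched_V1 n M) = n - card ({0..<n} \<inter> snd ` M)"
    unfolding unmatched_V1_def by (simp add: card_Diff_subset_Int)
  moreover have "card (unmatched_U2 n M) = n - card ({n..<2 * n} \<inter> fst ` M)"
    unfolding unmatched_U2_def by (simp add: card_Diff_subset_Int)
  moreover have "card ({n..<2 * n} \<inter> fst ` M) \<le> n"
    using card_mono[of "{n..<2 * n}" "{n..<2 * n} \<inter> fst ` M"] by auto
  ultimately show ?thesis using covered_V1 covered_U2 by linarith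
qed

definition cross_bicliques :: "nat \<Rightarrow> nat \<Rightarrow> (nat set \<times> nat set) set" where
  "cross_bicliques n k = {B. B \<subseteq> {n..<2 * n} \<and> card B = k} \<times> {A. A \<subseteq> {0..<n} \<and> card A = k}"

lemma card_greedy_thick_Z_le:
  assumes "set \<sigma> = thick_Z n"
  shows "card (greedy {} \<sigma>) \<le> n + 2 * card (set (take T \<sigma>) \<inter> thick_Z_diag n) + k
           + (if \<exists>(B, A) \<in> cross_bicliques n k. set (take T \<sigma>) \<inter> B \<times> A = {} then n else 0)"
proof -
  define M where "M = greedy {} \<sigma>"
  define P where "P = set (take T \<sigma>)"
  define MT where "MT = greedy {} (take T \<sigma>)"
  define D where "D = card (P \<inter> thick_Z_diag n)"
  define X where "X = {i \<in> {0..<n}. (i, i) \<in> M}"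
  have "is_matching M" "is_matching MT"
    unfolding M_def MT_def by (simp_all add: is_matching_greedy)
  have M_sub: "M \<subseteq> thick_Z n"
    unfolding M_def using greedy_subset[of "{}" \<sigma>] assms by simp
  have MT_sub: "MT \<subseteq> P"
    unfolding MT_def P_def using greedy_subset[of "{}" "take T \<sigma>"] by simp
  have "MT \<subseteq> M"
    unfolding M_def MT_def by (metis append_take_drop_id greedy_append greedy_mono)
  have MT_diag: "card (MT \<inter> thick_Z_diag n) \<le> D"
    unfolding D_def P_def using MT_sub by (intro card_mono) (auto simp: P_def)
  have M_le: "card M \<le> n + card X"
    unfolding X_def using M_sub \<open>is_matching M\<close> by (rule card_matching_thick_Z_le_diag)
  have X_le_unmatched: "card X \<le> D + card (unmatched_V1 n MT)"
    using card_diag_le_unmatched_V1[OF \<open>is_matching M\<close> \<open>MT \<subseteq> M\<close>, of n] MT_diag MT_sub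
    by (simp add: X_def finite_subset[OF MT_sub] P_def)
  have X_le: "card X \<le> n"
  proof -
    have "X \<subseteq> {0..<n}" by (auto simp: X_def)
    from card_mono[OF _ this] show ?thesis by simp
  qed
  have "MT \<subseteq> thick_Z n" using \<open>MT \<subseteq> M\<close> M_sub by blast
  then have unmatched_le: "card (unmatched_V1 n MT) \<le> card (unmatched_U2 n MT) + D"
    using card_unmatched_V1_le[of MT n] \<open>is_matching MT\<close> MT_diag by linarith
  show ?thesis
  proof (cases "k + D < card (unmatched_V1 n MT)")
    case True
    obtain A where A: "A \<subseteq> unmatched_V1 n MT" "card A = k"
      using obtain_subset_with_card_n[of k "unmatched_V1 n MT"] True by auto
    obtain B where B: "B \<subseteq> unmatched_U2 n MT" "card B = k"
      using obtain_subset_with_card_n[of k "unmatched_U2 n MT"] True unmatched_le by auto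
    have "(u, v) \<notin> P" if "u \<in> B" "v \<in> A" for u v
    proof -
      have "u \<notin> fst ` MT" "v \<notin> snd ` MT"
        using that A(1) B(1) by (auto simp: unmatched_V1_def unmatched_U2_def)
      then show ?thesis
        using greedy_covers[of "{}" u v "take T \<sigma>"] by (force simp: P_def MT_def)
    qed
    then have "P \<inter> B \<times> A = {}" by blast
    moreover have "(B, A) \<in> cross_bicliques n k"
      using A B by (auto simp: cross_bicliques_def unmatched_V1_def unmatched_U2_def)
    ultimately have "\<exists>(B, A) \<in> cross_bicliques n k. P \<inter> B \<times> A = {}" by blast
    then show ?thesis
      using M_le X_le unfolding M_def[symmetric] P_def[symmetric] by simp
  next
    case False
    then show ?thesis
      using M_le X_le_unmatched unfolding M_def[symmetric] P_def[symmetric] D_def[symmetric]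
      by simp
  qed
qed

lemma of_bool_bex_le_sum:
  assumes "finite S"
  shows "of_bool (\<exists>x \<in> S. P x) \<le> (\<Sum>x\<in>S. of_bool (P x) :: real)"
proof (cases "\<exists>x \<in> S. P x")
  case True
  then obtain x where "x \<in> S" "P x" by blast
  then have "of_bool (P x) \<le> (\<Sum>x\<in>S. of_bool (P x) :: real)"
    using assms by (intro member_le_sum) auto
  then show ?thesis using True \<open>P x\<close> by simp
qed (simp add: sum_nonneg)

lemma card_cross_bicliques: "card (cross_bicliques n k) = (n choose k) ^ 2"
  by (simp add: cross_bicliques_def card_cartesian_product n_subsets power2_eq_square)

lemma card_greedy_thick_Z_union_bound:
  assumes "set \<sigma> = thick_Z n"
  shows "real (card (greedy {} \<sigma>)) \<le> real n + 2 * real (card (set (take T \<sigma>) \<inter> thick_Z_diag n)) + real k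
           + real n * (\<Sum>(B, A)\<in>cross_bicliques n k. of_bool (set (take T \<sigma>) \<inter> B \<times> A = {}))"
proof -
  define bad where "bad = (\<exists>(B, A) \<in> cross_bicliques n k. set (take T \<sigma>) \<inter> B \<times> A = {})"
  have "real (card (greedy {} \<sigma>))
      \<le> real (n + 2 * card (set (take T \<sigma>) \<inter> thick_Z_diag n) + k + (if bad then n else 0))"
    unfolding of_nat_le_iff bad_def using assms by (rule card_greedy_thick_Z_le)
  then have greedy_le: "real (card (greedy {} \<sigma>))
      \<le> n + 2 * real (card (set (take T \<sigma>) \<inter> thick_Z_diag n)) + k + real n * of_bool bad"
    by (cases bad) simp_all
  have fin: "finite (cross_bicliques n k)"
    unfolding cross_bicliques_def by (rule finite_subset[of _ "Pow {n..<2*n} \<times> Pow {0..<n}"]) auto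
  have "of_bool bad \<le> (\<Sum>(B, A)\<in>cross_bicliques n k. of_bool (set (take T \<sigma>) \<inter> B \<times> A = {}) :: real)"
    using of_bool_bex_le_sum[OF fin, of "\<lambda>(B, A). set (take T \<sigma>) \<inter> B \<times> A = {}"]
    unfolding bad_def by (simp only: case_prod_unfold)
  then have "real n * of_bool bad
      \<le> real n * (\<Sum>(B, A)\<in>cross_bicliques n k. of_bool (set (take T \<sigma>) \<inter> B \<times> A = {}))"
    by (rule mult_left_mono) simp
  with greedy_le show ?thesis by linarith
qed

lemma expected_greedy_thick_Z_le:
  fixes n T k :: nat
  defines "N \<equiv> real (n * n + 2 * n)"
  shows "expected_greedy (thick_Z n)
           \<le> real n + 4 * real (T * n) / N + real k + real n * real (n choose k) ^ 2 * (1 - real (k * k) / N) ^ T"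
proof -
  define E where "E = thick_Z n"
  define CB where "CB = cross_bicliques n k"
  define misses where "misses = (\<lambda>(B, A) (\<sigma> :: (nat \<times> nat) list). of_bool (set (take T \<sigma>) \<inter> B \<times> A = {}) :: real)"
  have "finite E" by (simp add: E_def)
  have card_E: "real (card E) = N" unfolding E_def N_def by (simp add: card_thick_Z)
  have pointwise: "real (card (greedy {} \<sigma>)) \<le> n + 2 * real (card (set (take T \<sigma>) \<inter> thick_Z_diag n)) + k
              + n * (\<Sum>BA\<in>CB. misses BA \<sigma>)"
    if "\<sigma> \<in> permutations_of_set E" for \<sigma>
    using card_greedy_thick_Z_union_bound[of \<sigma> n T k] that
    by (simp add: CB_def misses_def E_def permutations_of_setD case_prod_unfold)
  have "expected_greedy E \<le> perm_avg E (\<lambda>\<sigma>. n + 2 * real (card (set (take T \<sigma>) \<inter> thick_Z_diag n)) + k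
              + n * (\<Sum>BA\<in>CB. misses BA \<sigma>))"
    unfolding expected_greedy_eq_perm_avg[OF \<open>finite E\<close>]
    by (rule perm_avg_mono) (rule pointwise)
  also have "\<dots> = n + 2 * perm_avg E (\<lambda>\<sigma>. real (card (set (take T \<sigma>) \<inter> thick_Z_diag n))) + k
              + n * (\<Sum>BA\<in>CB. perm_avg E (misses BA))"
    by (simp add: perm_avg_add perm_avg_cmult perm_avg_const perm_avg_sum E_def)
  also have "perm_avg E (\<lambda>\<sigma>. real (card (set (take T \<sigma>) \<inter> thick_Z_diag n))) \<le> 2 * real (T * n) / N"
  proof -
    have "thick_Z_diag n \<subseteq> E" by (simp add: E_def thick_Z_eq)
    then show ?thesis
      using perm_avg_prefix_count_le[OF \<open>finite E\<close>, of "thick_Z_diag n" T] card_E card_thick_Z_diag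
      by (simp add: mult.left_commute)
  qed
  also have "(\<Sum>BA\<in>CB. perm_avg E (misses BA)) \<le> (\<Sum>BA\<in>CB. (1 - real (k * k) / N) ^ T)"
  proof (intro sum_mono)
    fix BA assume "BA \<in> CB"
    then obtain B A where BA: "BA = (B, A)" "B \<subseteq> {n..<2 * n}" "card B = k" "A \<subseteq> {0..<n}" "card A = k"
      by (auto simp: CB_def cross_bicliques_def)
    then have "B \<times> A \<subseteq> E" by (auto simp: E_def thick_Z_def)
    moreover have "card (B \<times> A) = k * k" using BA by (simp add: card_cartesian_product)
    ultimately show "perm_avg E (misses BA) \<le> (1 - real (k * k) / N) ^ T"
      using perm_avg_prefix_disjoint_le[of E "B \<times> A" T] card_E by (simp add: E_def misses_def BA)
  qed
  also have "(\<Sum>BA\<in>CB. (1 - real (k * k) / N) ^ T) = (n choose k) ^ 2 * (1 - real (k * k) / N) ^ T"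
    by (simp add: CB_def card_cross_bicliques)
  finally show ?thesis by (simp add: E_def mult.assoc mult_left_mono)
qed

section \<open>Asymptotics\<close>

lemma real_le_two_mult_div:
  assumes "0 < j" "j \<le> m"
  shows "real m \<le> 2 * real j * real (m div j)"
proof -
  have "1 \<le> m div j" using assms by (simp add: Suc_le_eq div_greater_zero_iff)
  have "m = j * (m div j) + m mod j" by simp
  moreover have "m mod j < j" using assms by simp
  ultimately have "m \<le> j * (m div j) + j" by linarith
  also have "\<dots> \<le> j * (m div j) + j * (m div j)"
    using \<open>1 \<le> m div j\<close> by simp
  finally have "m \<le> 2 * j * (m div j)" by linarith
  then have "real m \<le> real (2 * j * (m div j))" by (simp only: of_nat_le_iff)
  then show ?thesis by simp
qed

lemma one_minus_power_le_exp:
  fixes x :: real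
  assumes "0 \<le> x" "x \<le> 1"
  shows "(1 - x) ^ T \<le> exp (- (x * T))"
proof -
  have "(1 - x) ^ T \<le> exp (- x) ^ T"
    using assms exp_ge_add_one_self[of "- x"] by (intro power_mono) auto
  also have "\<dots> = exp (- (x * T))"
    by (simp add: exp_of_nat_mult[symmetric] mult.commute)
  finally show ?thesis .
qed

lemma four_power_le_exp: "(4::real) ^ n \<le> exp (2 * real n)"
proof -
  have "(2::real) \<le> exp 1" using exp_ge_add_one_self[of 1] by simp
  then have "(4::real) \<le> exp 1 * exp 1" using mult_mono[of "2::real" "exp 1" 2 "exp 1"] by simp
  then have "(4::real) \<le> exp 2" by (simp flip: exp_add)
  then have "(4::real) ^ n \<le> exp 2 ^ n" by (intro power_mono) auto
  then show ?thesis by (simp add: exp_of_nat_mult[symmetric] mult.commute)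
qed

lemma four_power_mult_miss_le:
  fixes n j :: nat
  assumes "1 \<le> j" "24 * j ^ 3 * (j + 2) \<le> n"
  shows "4 ^ n * (1 - real (n div j * (n div j)) / real (n * n + 2 * n)) ^ (n * n div j) \<le> 1 / real j"
proof -
  define k where "k = n div j"
  define T where "T = n * n div j"
  define N where "N = real (n * n + 2 * n)"
  define x where "x = real (k * k) / N"
  have "j \<le> 24 * j ^ 3 * (j + 2)"
  proof -
    have "j * 1 \<le> j * (24 * j ^ 2 * (j + 2))"
      using assms(1) by (intro mult_le_mono2) (simp add: Suc_le_eq)
    also have "\<dots> = 24 * j ^ 3 * (j + 2)"
      by (simp add: power2_eq_square power3_eq_cube mult_ac)
    finally show ?thesis by simp
  qed
  with assms(2) have "j \<le> n" by linarith
  then have "1 \<le> n" using assms(1) by simp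
  have "j \<le> n * n" using \<open>j \<le> n\<close> le_square order_trans by blast
  have N_pos: "0 < N" unfolding N_def of_nat_0_less_iff using \<open>1 \<le> n\<close> by simp
  have "N \<le> 3 * real n ^ 2"
    using \<open>1 \<le> n\<close> by (simp add: N_def power2_eq_square)
  have x_le: "x \<le> 1"
  proof -
    have "k * k \<le> n * n + 2 * n" unfolding k_def using div_le_dividend mult_le_mono trans_le_add1 by blast
    then have "real (k * k) \<le> N" unfolding N_def of_nat_le_iff .
    then show ?thesis using N_pos by (simp add: x_def)
  qed
  have k_ge: "real n \<le> 2 * real j * real k"
    unfolding k_def using assms(1) \<open>j \<le> n\<close> by (intro real_le_two_mult_div) auto
  have T_ge: "real n ^ 2 \<le> 2 * real j * real T"
    unfolding T_def power2_eq_square using assms(1) \<open>j \<le> n * n\<close>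
    by (metis of_nat_mult real_le_two_mult_div less_le_trans zero_less_one)
  have exponent_ge: "real n ^ 2 / (24 * real j ^ 3) \<le> x * T"
  proof -
    have "real n ^ 2 \<le> 4 * real j ^ 2 * real (k * k)"
      using power_mono[OF k_ge, of 2] by (simp add: power_mult_distrib power2_eq_square mult_ac)
    then have "real n ^ 2 * real n ^ 2 \<le> (4 * real j ^ 2 * real (k * k)) * (2 * real j * real T)"
      using T_ge by (intro mult_mono) auto
    also have "\<dots> = 8 * (real j ^ 3 * (real (k * k) * real T))"
      by (simp add: power2_eq_square power3_eq_cube mult_ac)
    finally have n4_le: "real n ^ 2 * real n ^ 2 \<le> 8 * (real j ^ 3 * (real (k * k) * real T))" .
    have "real n ^ 2 * N \<le> real n ^ 2 * (3 * real n ^ 2)"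
      using \<open>N \<le> 3 * real n ^ 2\<close> by (intro mult_left_mono) simp_all
    also have "\<dots> = 3 * (real n ^ 2 * real n ^ 2)"
      by (simp only: mult.left_commute)
    also have "\<dots> \<le> 24 * (real j ^ 3 * (real (k * k) * real T))"
      using n4_le by linarith
    finally show ?thesis
      using N_pos assms(1) by (simp add: x_def pos_divide_le_eq pos_le_divide_eq mult_ac)
  qed
  have "2 * real n - real n ^ 2 / (24 * real j ^ 3) \<le> - real j"
  proof -
    have "real (24 * j ^ 3 * (j + 2)) \<le> real n"
      using assms(2) by (simp only: of_nat_le_iff)
    then have "24 * real j ^ 3 * (real j + 2) \<le> real n"
      by (simp only: of_nat_mult of_nat_add of_nat_power of_nat_numeral)
    then have "real n * (24 * real j ^ 3 * (real j + 2)) \<le> real n * real n"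
      by (intro mult_left_mono) auto
    then have "real n * (real j + 2) \<le> real n ^ 2 / (24 * real j ^ 3)"
      using assms(1) by (simp add: pos_le_divide_eq power2_eq_square mult_ac)
    moreover have "real j \<le> real n * real j" using \<open>1 \<le> n\<close> by (simp add: mult_le_cancel_right1)
    ultimately show ?thesis by (simp add: algebra_simps)
  qed
  have "0 \<le> x" using N_pos by (simp add: x_def)
  then have "(1 - x) ^ T \<le> exp (- (x * T))"
    using x_le by (rule one_minus_power_le_exp)
  also have "\<dots> \<le> exp (- (real n ^ 2 / (24 * real j ^ 3)))"
    using exponent_ge by simp
  finally have "4 ^ n * (1 - x) ^ T \<le> exp (2 * real n) * exp (- (real n ^ 2 / (24 * real j ^ 3)))"
    using four_power_le_exp[of n] x_le by (intro mult_mono) simp_all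
  also have "\<dots> \<le> exp (- real j)"
    using \<open>2 * real n - real n ^ 2 / (24 * real j ^ 3) \<le> - real j\<close> by (simp flip: exp_add)
  also have "\<dots> = 1 / exp (real j)"
    by (simp add: exp_minus inverse_eq_divide)
  also have "\<dots> \<le> 1 / real j"
  proof -
    have "real j \<le> exp (real j)" using exp_ge_add_one_self[of "real j"] by linarith
    then show ?thesis using assms(1) by (intro frac_le) simp_all
  qed
  finally show ?thesis unfolding x_def k_def T_def N_def .
qed

lemma expected_greedy_thick_Z_upper:
  fixes n j :: nat
  assumes "1 \<le> j" "24 * j ^ 3 * (j + 2) \<le> n"
  shows "expected_greedy (thick_Z n) \<le> real n + 6 * real n / real j"
proof -
  define k where "k = n div j"
  define T where "T = n * n div j"
  define N where "N = real (n * n + 2 * n)"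
  define q where "q = (1 - real (k * k) / N) ^ T"
  have "0 < n"
    using assms order_trans[of 1 "24 * j ^ 3 * (j + 2)" n] by (simp add: Suc_le_eq)
  have "real n * real n \<le> N" by (simp add: N_def)
  have "real T \<le> real n * real n / real j"
    unfolding T_def using of_nat_div_le_of_nat[of "n * n" j] by simp
  then have "4 * (real T * real n) / N \<le> 4 * (real n * real n / real j * real n) / (real n * real n)"
    using \<open>real n * real n \<le> N\<close> \<open>0 < n\<close> by (intro frac_le mult_left_mono mult_right_mono) simp_all
  also have "\<dots> = 4 * real n / real j"
    using \<open>0 < n\<close> by (simp add: field_simps)
  finally have diag_term: "4 * real (T * n) / N \<le> 4 * real n / real j"
    by simp
  have k_term: "real k \<le> real n / real j"
    unfolding k_def by (rule of_nat_div_le_of_nat)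
  have "0 \<le> q"
  proof -
    have "k * k \<le> n * n + 2 * n"
      unfolding k_def using div_le_dividend mult_le_mono trans_le_add1 by blast
    then have "real (k * k) \<le> N" unfolding N_def of_nat_le_iff .
    moreover have "0 \<le> N" by (simp add: N_def)
    ultimately have "real (k * k) / N \<le> 1"
      by (cases "N = 0") (simp_all add: divide_le_eq_1)
    then show ?thesis unfolding q_def by simp
  qed
  have "real (n choose k) ^ 2 * q \<le> 1 / real j"
  proof -
    have "real (n choose k) \<le> real (2 ^ n)"
      using binomial_le_pow2[of n k] by (simp only: of_nat_le_iff)
    then have "real (n choose k) ^ 2 \<le> (2 ^ n) ^ 2"
      by (intro power_mono) simp_all
    also have "((2::real) ^ n) ^ 2 = (2 ^ 2) ^ n"
      by (simp only: power_mult[symmetric] mult.commute)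
    finally have "real (n choose k) ^ 2 * q \<le> 4 ^ n * q"
      using \<open>0 \<le> q\<close> by (intro mult_right_mono) simp_all
    also have "\<dots> \<le> 1 / real j"
      using four_power_mult_miss_le[OF assms] unfolding q_def k_def T_def N_def .
    finally show ?thesis .
  qed
  then have choose_term: "real n * real (n choose k) ^ 2 * q \<le> real n / real j"
    using mult_left_mono[of _ _ "real n"] by (fastforce simp: mult.assoc)
  have "4 * real n / real j + real n / real j + real n / real j = 6 * real n / real j"
    by (simp add: field_simps)
  then show ?thesis
    using expected_greedy_thick_Z_le[of n T k, folded N_def] diag_term k_term choose_term[unfolded q_def]
    by linarith
qed

lemma expected_greedy_thick_Z_ge: "real n \<le> expected_greedy (thick_Z n)"
proof -
  have "real n = perm_avg (thick_Z n) (\<lambda>_. real n)"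
    by (simp add: perm_avg_const)
  also have "\<dots> \<le> perm_avg (thick_Z n) (\<lambda>\<sigma>. real (card (greedy {} \<sigma>)))"
    by (intro perm_avg_mono) (simp add: card_greedy_thick_Z_ge permutations_of_setD)
  also have "\<dots> = expected_greedy (thick_Z n)"
    by (simp add: expected_greedy_eq_perm_avg)
  finally show ?thesis .
qed

lemma LIMSEQ_from_bounds:
  fixes f :: "nat \<Rightarrow> real"
  assumes lower: "eventually (\<lambda>n. c \<le> f n) sequentially"
    and upper: "\<And>j. 1 \<le> j \<Longrightarrow> eventually (\<lambda>n. f n \<le> c + C / real j) sequentially"
  shows "f \<longlonglongrightarrow> c"
proof (rule order_tendstoI)
  fix a assume "a < c"
  with lower show "eventually (\<lambda>n. a < f n) sequentially"
    by (auto elim: eventually_mono)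
next
  fix a assume "c < a"
  obtain j :: nat where "C / (a - c) < real j"
    using reals_Archimedean2 by blast
  then have "C / (a - c) < real (Suc j)" by simp
  then have "C / real (Suc j) < a - c"
    using \<open>c < a\<close> by (simp add: field_simps)
  with upper[of "Suc j"] show "eventually (\<lambda>n. f n < a) sequentially"
    by (auto elim: eventually_mono)
qed

theorem lemma10:
  shows "(\<lambda>n. expected_greedy (thick_Z n) / real (max_matching_size (thick_Z n)))
           \<longlonglongrightarrow> 1 / 2"
  unfolding max_matching_size_thick_Z
proof (rule LIMSEQ_from_bounds[where C = 3])
  show "eventually (\<lambda>n. 1 / 2 \<le> expected_greedy (thick_Z n) / real (2 * n)) sequentially"
  proof (rule eventually_sequentiallyI)
    fix n :: nat assume "1 \<le> n"
    then show "1 / 2 \<le> expected_greedy (thick_Z n) / real (2 * n)"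
      using expected_greedy_thick_Z_ge[of n] by (simp add: pos_le_divide_eq)
  qed
  fix j :: nat assume "1 \<le> j"
  show "eventually (\<lambda>n. expected_greedy (thick_Z n) / real (2 * n) \<le> 1 / 2 + 3 / real j) sequentially"
  proof (rule eventually_sequentiallyI)
    fix n assume n: "24 * j ^ 3 * (j + 2) \<le> n"
    then have "0 < n"
      using \<open>1 \<le> j\<close> order_trans[of 1 "24 * j ^ 3 * (j + 2)" n] by (simp add: Suc_le_eq)
    then show "expected_greedy (thick_Z n) / real (2 * n) \<le> 1 / 2 + 3 / real j"
      using expected_greedy_thick_Z_upper[OF \<open>1 \<le> j\<close> n] \<open>1 \<le> j\<close>
      by (simp add: field_simps)
  qed
qed

end
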